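(* Let $(X,\widetilde{\tau}_X,\mathfrak{a}_E,E)$ and $(Y,\widetilde{\tau}_Y,\mathfrak{b}_K,K)$ be soft aura topological spaces and $f_{up}$ a soft mapping from $(X,E)$ to $(Y,K)$. With the generalized open-set classes defined using $\mathrm{cl}_{\mathfrak{a}}^{\infty}$ in place of $\mathrm{cl}_{\mathfrak{a}}$, $f_{up}$ is soft $\mathfrak{a}$-$\alpha$-continuous (w.r.t. $\mathrm{cl}_{\mathfrak{a}}^{\infty}$) if and only if it is both soft $\mathfrak{a}$-semi-continuous and soft $\mathfrak{a}$-pre-continuous (w.r.t. $\mathrm{cl}_{\mathfrak{a}}^{\infty}$).
   Context: For a nonempty set $X$ and nonempty parameter set $E$, a soft set is a map $F:E\to\mathcal{P}(X)$, written $(F,E)$; $\mathrm{SS}(X,E)$ denotes all soft sets; $\sqsubseteq$, $\sqcup$ are parameterwise. A soft topology is a subfamily of $\mathrm{SS}(X,E)$ containing the soft sets with all values $\emptyset$ and all values $X$, closed under arbitrary soft unions and finite soft intersections. A soft scope function is a map $\mathfrak{a}_E:X\to\widetilde{\tau}_X$ with $x\in\mathfrak{a}_E(x)(e)$ for all $x,e$; $(X,\widetilde{\tau}_X,\mathfrak{a}_E,E)$ is a soft aura topological space (similarly for $Y$ with $\mathfrak{b}_K$). $\mathrm{cl}_{\mathfrak{a}}(G,E)(e)=\{x:\mathfrak{a}_E(x)(e)\cap G(e)\neq\emptyset\}$, $\mathrm{int}_{\mathfrak{a}}(G,E)(e)=\{x:\mathfrak{a}_E(x)(e)\subseteq G(e)\}$;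 $\mathrm{int}_{\mathfrak{b}}$ analogously on $Y$; $(V,K)$ is soft $\mathfrak{b}$-open if $\mathrm{int}_{\mathfrak{b}}(V,K)=(V,K)$. $\mathrm{cl}_{\mathfrak{a}}^{\infty}$ is the stable value of the transfinite iterates $\mathrm{cl}_{\mathfrak{a}}^0=\mathrm{id}$, $\mathrm{cl}_{\mathfrak{a}}^{\alpha+1}=\mathrm{cl}_{\mathfrak{a}}\circ\mathrm{cl}_{\mathfrak{a}}^{\alpha}$, $\mathrm{cl}_{\mathfrak{a}}^{\lambda}=\bigsqcup_{\alpha<\lambda}\mathrm{cl}_{\mathfrak{a}}^{\alpha}$ at limits; it is a soft Kuratowski closure operator. W.r.t. $\mathrm{cl}_{\mathfrak{a}}^{\infty}$: $(G,E)$ is soft $\mathfrak{a}$-semi-open if $(G,E)\sqsubseteq\mathrm{cl}_{\mathfrak{a}}^{\infty}(\mathrm{int}_{\mathfrak{a}}(G,E))$; pre-open if $(G,E)\sqsubseteq\mathrm{int}_{\mathfrak{a}}(\mathrm{cl}_{\mathfrak{a}}^{\infty}(G,E))$; $\alpha$-open if $(G,E)\sqsubseteq\mathrm{int}_{\mathfrak{a}}(\mathrm{cl}_{\mathfrak{a}}^{\infty}(\mathrm{int}_{\mathfrak{a}}(G,E)))$. A soft mapping $f_{up}=(u,p)$ has $u:X\to Y$, $p:E\to K$, $f_{up}^{-1}(V,K)(e)=u^{-1}(V(p(e)))$. $f_{up}$ is soft $\mathfrak{a}$-semi- (resp. pre-, $\alpha$-) continuous if $f_{up}^{-1}(V,K)$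 is soft $\mathfrak{a}$-semi-open (resp. pre-open, $\alpha$-open) for every soft $\mathfrak{b}$-open $(V,K)$. *)

theory Defs
  imports Main
begin

text \<open>Universe X is the type 'a, parameter set E is the type 'e (types are nonempty).
A soft set (F,E) is a map F :: 'e \<Rightarrow> 'a set.\<close>

type_synonym ('e, 'a) soft_set = "'e \<Rightarrow> 'a set"

definition soft_subset :: "('e, 'a) soft_set \<Rightarrow> ('e, 'a) soft_set \<Rightarrow> bool" where
  "soft_subset F G \<longleftrightarrow> (\<forall>e. F e \<subseteq> G e)"

definition soft_topology :: "('e, 'a) soft_set set \<Rightarrow> bool" where
  "soft_topology T \<longleftrightarrow>
     (\<lambda>e. {}) \<in> T \<and> (\<lambda>e. UNIV) \<in> T \<and>
     (\<forall>S. S \<subseteq> T \<longrightarrow> (\<lambda>e. \<Union>F\<in>S. F e) \<in> T) \<and>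
     (\<forall>F\<in>T. \<forall>G\<in>T. (\<lambda>e. F e \<inter> G e) \<in> T)"

definition soft_scope_function :: "('e, 'a) soft_set set \<Rightarrow> ('a \<Rightarrow> ('e, 'a) soft_set) \<Rightarrow> bool" where
  "soft_scope_function T a \<longleftrightarrow> (\<forall>x. a x \<in> T) \<and> (\<forall>x e. x \<in> a x e)"

definition soft_aura_space :: "('e, 'a) soft_set set \<Rightarrow> ('a \<Rightarrow> ('e, 'a) soft_set) \<Rightarrow> bool" where
  "soft_aura_space T a \<longleftrightarrow> soft_topology T \<and> soft_scope_function T a"

definition cl_aura :: "('a \<Rightarrow> ('e, 'a) soft_set) \<Rightarrow> ('e, 'a) soft_set \<Rightarrow> ('e, 'a) soft_set" where
  "cl_aura a G = (\<lambda>e. {x. a x e \<inter> G e \<noteq> {}})"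

definition int_aura :: "('a \<Rightarrow> ('e, 'a) soft_set) \<Rightarrow> ('e, 'a) soft_set \<Rightarrow> ('e, 'a) soft_set" where
  "int_aura a G = (\<lambda>e. {x. a x e \<subseteq> G e})"

text \<open>The stable value of the transfinite iterates cl^0 = id, cl^(k+1) = cl o cl^k,
 cl^lambda = union of earlier iterates: as cl is monotone and extensive, this is the
 least soft set above G closed under one further application of cl, i.e. the least
 fixed point of H \<mapsto> G \<squnion> cl H (pointwise order on soft sets).\<close>
definition cl_aura_inf :: "('a \<Rightarrow> ('e, 'a) soft_set) \<Rightarrow> ('e, 'a) soft_set \<Rightarrow> ('e, 'a) soft_set" where
  "cl_aura_inf a G = lfp (\<lambda>H. (\<lambda>e. G e \<union> cl_aura a H e))"

definition soft_aura_open :: "('a \<Rightarrow> ('e, 'a) soft_set) \<Rightarrow> ('e, 'a) soft_set \<Rightarrow> bool" where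
  "soft_aura_open a G \<longleftrightarrow> int_aura a G = G"

definition soft_semi_open :: "('a \<Rightarrow> ('e, 'a) soft_set) \<Rightarrow> ('e, 'a) soft_set \<Rightarrow> bool" where
  "soft_semi_open a G \<longleftrightarrow> soft_subset G (cl_aura_inf a (int_aura a G))"

definition soft_pre_open :: "('a \<Rightarrow> ('e, 'a) soft_set) \<Rightarrow> ('e, 'a) soft_set \<Rightarrow> bool" where
  "soft_pre_open a G \<longleftrightarrow> soft_subset G (int_aura a (cl_aura_inf a G))"

definition soft_alpha_open :: "('a \<Rightarrow> ('e, 'a) soft_set) \<Rightarrow> ('e, 'a) soft_set \<Rightarrow> bool" where
  "soft_alpha_open a G \<longleftrightarrow> soft_subset G (int_aura a (cl_aura_inf a (int_aura a G)))"

text \<open>Soft mapping f_up = (u,p): preimage f_up^{-1}(V,K)(e) = u^{-1}(V(p e)).\<close>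
definition soft_preimage :: "('a \<Rightarrow> 'b) \<Rightarrow> ('e \<Rightarrow> 'k) \<Rightarrow> ('k, 'b) soft_set \<Rightarrow> ('e, 'a) soft_set" where
  "soft_preimage u p V = (\<lambda>e. u -` V (p e))"

definition soft_semi_continuous ::
  "('a \<Rightarrow> ('e, 'a) soft_set) \<Rightarrow> ('b \<Rightarrow> ('k, 'b) soft_set) \<Rightarrow> ('a \<Rightarrow> 'b) \<Rightarrow> ('e \<Rightarrow> 'k) \<Rightarrow> bool" where
  "soft_semi_continuous a b u p \<longleftrightarrow>
     (\<forall>V. soft_aura_open b V \<longrightarrow> soft_semi_open a (soft_preimage u p V))"

definition soft_pre_continuous ::
  "('a \<Rightarrow> ('e, 'a) soft_set) \<Rightarrow> ('b \<Rightarrow> ('k, 'b) soft_set) \<Rightarrow> ('a \<Rightarrow> 'b) \<Rightarrow> ('e \<Rightarrow> 'k) \<Rightarrow> bool" where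
  "soft_pre_continuous a b u p \<longleftrightarrow>
     (\<forall>V. soft_aura_open b V \<longrightarrow> soft_pre_open a (soft_preimage u p V))"

definition soft_alpha_continuous ::
  "('a \<Rightarrow> ('e, 'a) soft_set) \<Rightarrow> ('b \<Rightarrow> ('k, 'b) soft_set) \<Rightarrow> ('a \<Rightarrow> 'b) \<Rightarrow> ('e \<Rightarrow> 'k) \<Rightarrow> bool" where
  "soft_alpha_continuous a b u p \<longleftrightarrow>
     (\<forall>V. soft_aura_open b V \<longrightarrow> soft_alpha_open a (soft_preimage u p V))"

end

theory Submission
  imports Defs
begin

(* The aura interior is monotone and, because every point lies in its own aura, deflationary;
   cl_aura_inf is a monotone idempotent hull. Hence G \<le> int (cl (int G)) implies both
   G \<le> cl (int G) and G \<le> int (cl G). Conversely, G \<le> cl (int G) gives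
   cl G \<le> cl (cl (int G)) = cl (int G), which upgrades G \<le> int (cl G) to
   G \<le> int (cl (int G)). *)

lemma soft_subset_iff_le: "soft_subset F G \<longleftrightarrow> F \<le> G"
  unfolding soft_subset_def le_fun_def by simp

lemma int_aura_mono: "F \<le> G \<Longrightarrow> int_aura a F \<le> int_aura a G"
  unfolding int_aura_def le_fun_def by blast

lemma int_aura_le:
  assumes "\<And>x e. x \<in> a x e"
  shows "int_aura a G \<le> G"
  using assms unfolding int_aura_def le_fun_def by blast

lemma mono_cl_aura_step: "mono (\<lambda>H. (\<lambda>e. G e \<union> cl_aura a H e))"
  by (rule monoI) (auto simp: le_fun_def cl_aura_def)

lemma cl_aura_inf_unfold: "cl_aura_inf a G = (\<lambda>e. G e \<union> cl_aura a (cl_aura_inf a G) e)"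
  unfolding cl_aura_inf_def by (rule lfp_unfold[OF mono_cl_aura_step])

lemma cl_aura_inf_mono: "F \<le> G \<Longrightarrow> cl_aura_inf a F \<le> cl_aura_inf a G"
  unfolding cl_aura_inf_def by (rule lfp_mono) (auto simp: le_fun_def)

lemma cl_aura_inf_idem: "cl_aura_inf a (cl_aura_inf a G) = cl_aura_inf a G"
proof (rule antisym)
  have "cl_aura a (cl_aura_inf a G) \<le> cl_aura_inf a G"
    by (subst (2) cl_aura_inf_unfold) (auto simp: le_fun_def)
  then show "cl_aura_inf a (cl_aura_inf a G) \<le> cl_aura_inf a G"
    unfolding cl_aura_inf_def[of a "cl_aura_inf a G"]
    by (intro lfp_lowerbound) (auto simp: le_fun_def)
next
  show "cl_aura_inf a G \<le> cl_aura_inf a (cl_aura_inf a G)"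
    by (subst (2) cl_aura_inf_unfold) (auto simp: le_fun_def)
qed

lemma soft_alpha_open_iff_semi_open_pre_open:
  assumes "\<And>x e. x \<in> a x e"
  shows "soft_alpha_open a G \<longleftrightarrow> soft_semi_open a G \<and> soft_pre_open a G"
  unfolding soft_alpha_open_def soft_semi_open_def soft_pre_open_def soft_subset_iff_le
proof safe
  assume alpha: "G \<le> int_aura a (cl_aura_inf a (int_aura a G))"
  have int_le: "int_aura a H \<le> H" for H
    using int_aura_le assms by blast
  show "G \<le> cl_aura_inf a (int_aura a G)"
    using alpha int_le order_trans by blast
  have "cl_aura_inf a (int_aura a G) \<le> cl_aura_inf a G"
    by (rule cl_aura_inf_mono[OF int_le])
  then show "G \<le> int_aura a (cl_aura_inf a G)"
    using alpha int_aura_mono order_trans by blast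
next
  assume semi: "G \<le> cl_aura_inf a (int_aura a G)"
    and pre: "G \<le> int_aura a (cl_aura_inf a G)"
  have "cl_aura_inf a G \<le> cl_aura_inf a (int_aura a G)"
    using cl_aura_inf_mono[OF semi] by (metis cl_aura_inf_idem)
  then show "G \<le> int_aura a (cl_aura_inf a (int_aura a G))"
    using pre int_aura_mono order_trans by blast
qed

theorem theorem5p3:
  fixes TX :: "('e, 'a) soft_set set" and a :: "'a \<Rightarrow> ('e, 'a) soft_set"
    and TY :: "('k, 'b) soft_set set" and b :: "'b \<Rightarrow> ('k, 'b) soft_set"
    and u :: "'a \<Rightarrow> 'b" and p :: "'e \<Rightarrow> 'k"
  assumes "soft_aura_space TX a" and "soft_aura_space TY b"
  shows "soft_alpha_continuous a b u p \<longleftrightarrow>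
           soft_semi_continuous a b u p \<and> soft_pre_continuous a b u p"
proof -
  have "x \<in> a x e" for x e
    using assms(1) unfolding soft_aura_space_def soft_scope_function_def by blast
  then have "soft_alpha_open a G \<longleftrightarrow> soft_semi_open a G \<and> soft_pre_open a G" for G
    by (rule soft_alpha_open_iff_semi_open_pre_open)
  then show ?thesis
    unfolding soft_alpha_continuous_def soft_semi_continuous_def soft_pre_continuous_def
    by blast
qed

end
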